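(* Let $u_0,u_1\in\mathcal E_0(D)$ and let $u_t$, $0<t<1$, be their geodesic. Then: (i) for each $t\in(0,1)$, $u_t(z)\to0$ as $z\to\partial D$; (ii) $u_t\to u_j$ uniformly on $D$ as $t\to j$, for $j=0,1$; (iii) $u_t\le (1-t)u_0+tu_1$ on $D$ for all $t\in(0,1)$; (iv) $u_t\ge\max\{u_0-M_1t,\;u_1-M_0(1-t)\}$ on $D$ for all $t\in(0,1)$, where $M_j=\sup_D|u_j|$.
   Context: $D\subset\mathbb C^n$ is a bounded hyperconvex domain; $\mathrm{PSH}^-(\Omega)$ denotes the set of nonpositive plurisubharmonic functions on $\Omega$. $\mathcal E_0(D)$ is the set of bounded plurisubharmonic functions $u$ on $D$ with $\lim_{z\to\partial D}u(z)=0$ and $\int_D(dd^cu)^n<\infty$. Let $S=\{\zeta\in\mathbb C:1<|\zeta|<e\}$, with boundary circles $S_0=\{|\zeta|=1\}$, $S_1=\{|\zeta|=e\}$. For $u_0,u_1\in\mathcal E_0(D)$, $W(u_0,u_1)$ is the set of $U\in\mathrm{PSH}^-(D\times S)$ such that $\limsup_{(x,\zeta)\to(z,\zeta_0)}U(x,\zeta)\le u_j(z)$ for all $z\in D$, $\zeta_0\in S_j$, $j=0,1$. Let $\widehat u=\sup\{U:U\in W(u_0,u_1)\}$; it belongs to $W(u_0,u_1)$ and depends only on $(z,|\zeta|)$. The geodesic of $u_0,u_1$ is $u_t(z):=\widehat u(z,e^t)$, $0<t<1$. *)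

theory Defs
  imports "HOL-Analysis.Analysis" "HOL-Library.Extended_Real"
begin

definition usc_on :: "'a::topological_space set \<Rightarrow> ('a \<Rightarrow> ereal) \<Rightarrow> bool" where
  "usc_on \<Omega> f \<longleftrightarrow> (\<forall>x\<in>\<Omega>. Limsup (at x within \<Omega>) f \<le> f x)"

text \<open>Mean value of f over the circle t \<mapsto> a + e^{i t} b, computed for an upper bound M
  of f on the circle as M - (1/2pi) int (M - f); this is independent of M and may be -infinity.\<close>
definition circle_mean ::
  "(complex \<Rightarrow> 'a \<Rightarrow> 'a) \<Rightarrow> ('a::real_vector \<Rightarrow> ereal) \<Rightarrow> 'a \<Rightarrow> 'a \<Rightarrow> real \<Rightarrow> ereal" where
  "circle_mean cmul f a b M =
     ereal M - enn2ereal (\<integral>\<^sup>+ t. e2ennreal (ereal M - f (a + cmul (cis t) b))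
                              * indicator {0..2*pi} t \<partial>lborel) / ereal (2*pi)"

text \<open>Plurisubharmonicity on an open set of a complex vector space, where the
  complex scalar multiplication is given by cmul: f is upper semicontinuous, never +infinity,
  and its restriction to every complex line is subharmonic (sub-mean value property on every
  closed disc contained in the set).\<close>
definition psh_gen :: "(complex \<Rightarrow> 'a \<Rightarrow> 'a) \<Rightarrow> 'a::real_normed_vector set \<Rightarrow> ('a \<Rightarrow> ereal) \<Rightarrow> bool" where
  "psh_gen cmul \<Omega> f \<longleftrightarrow> open \<Omega> \<and> usc_on \<Omega> f \<and> (\<forall>x\<in>\<Omega>. f x < \<infinity>) \<and>
     (\<forall>a b. (\<forall>\<zeta>. cmod \<zeta> \<le> 1 \<longrightarrow> a + cmul \<zeta> b \<in> \<Omega>) \<longrightarrow>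
        (\<forall>M::real. (\<forall>t. f (a + cmul (cis t) b) \<le> ereal M) \<longrightarrow> f a \<le> circle_mean cmul f a b M))"

abbreviation psh :: "(complex^'n) set \<Rightarrow> (complex^'n \<Rightarrow> ereal) \<Rightarrow> bool" where
  "psh \<equiv> psh_gen (\<lambda>c v. c *s v)"

definition cmul_pair :: "complex \<Rightarrow> ((complex^'n) \<times> complex) \<Rightarrow> ((complex^'n) \<times> complex)" where
  "cmul_pair c p = (c *s fst p, c * snd p)"

abbreviation psh2 :: "((complex^'n) \<times> complex) set \<Rightarrow> ((complex^'n) \<times> complex \<Rightarrow> ereal) \<Rightarrow> bool" where
  "psh2 \<equiv> psh_gen cmul_pair"

definition hyperconvex :: "(complex^'n) set \<Rightarrow> bool" where
  "hyperconvex D \<longleftrightarrow> open D \<and> connected D \<and> D \<noteq> {} \<and> bounded D \<and>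
     (\<exists>\<rho>::complex^'n \<Rightarrow> real. psh D (\<lambda>z. ereal (\<rho> z)) \<and> continuous_on D \<rho> \<and>
        (\<forall>z\<in>D. \<rho> z < 0) \<and> (\<forall>c<0. closure {z\<in>D. \<rho> z < c} \<subseteq> D))"

definition tends_to_zero_at_boundary :: "'a::topological_space set \<Rightarrow> ('a \<Rightarrow> ereal) \<Rightarrow> bool" where
  "tends_to_zero_at_boundary D f \<longleftrightarrow>
     (\<forall>\<epsilon>>0. \<exists>K. compact K \<and> K \<subseteq> D \<and> (\<forall>z\<in>D - K. \<bar>f z\<bar> < ereal \<epsilon>))"

definition dir_deriv :: "('a::real_normed_vector \<Rightarrow> real) \<Rightarrow> 'a \<Rightarrow> 'a \<Rightarrow> real" where
  "dir_deriv u v z = deriv (\<lambda>t. u (z + t *\<^sub>R v)) 0"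

definition dir_deriv2 :: "('a::real_normed_vector \<Rightarrow> real) \<Rightarrow> 'a \<Rightarrow> 'a \<Rightarrow> 'a \<Rightarrow> real" where
  "dir_deriv2 u v w z = dir_deriv (\<lambda>y. dir_deriv u v y) w z"

definition C2_on :: "'a::real_normed_vector set \<Rightarrow> ('a \<Rightarrow> real) \<Rightarrow> bool" where
  "C2_on U u \<longleftrightarrow> open U \<and> continuous_on U u \<and>
     (\<forall>z\<in>U. \<forall>v. (\<lambda>t. u (z + t *\<^sub>R v)) differentiable (at 0)) \<and>
     (\<forall>z\<in>U. \<forall>v w. (\<lambda>t. dir_deriv u v (z + t *\<^sub>R w)) differentiable (at 0)) \<and>
     (\<forall>v. continuous_on U (dir_deriv u v)) \<and>
     (\<forall>v w. continuous_on U (dir_deriv2 u v w))"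

text \<open>Complex Hessian entry d^2 u / dz_j d(conj z_k), with z_j = x_j + i y_j.\<close>
definition cx_hessian :: "(complex^'n \<Rightarrow> real) \<Rightarrow> complex^'n \<Rightarrow> complex^'n^'n" where
  "cx_hessian u z = (\<chi> j k.
     complex_of_real ((dir_deriv2 u (axis j 1) (axis k 1) z + dir_deriv2 u (axis j \<i>) (axis k \<i>) z) / 4)
     + \<i> * complex_of_real ((dir_deriv2 u (axis j 1) (axis k \<i>) z - dir_deriv2 u (axis j \<i>) (axis k 1) z) / 4))"

text \<open>Density of (dd^c u)^n w.r.t. Lebesgue measure for C^2 u, up to a positive
  dimensional normalising constant (irrelevant for finiteness of the total mass).\<close>
definition MA_density :: "(complex^'n \<Rightarrow> real) \<Rightarrow> complex^'n \<Rightarrow> real" where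
  "MA_density u z = Re (det (cx_hessian u z))"

text \<open>Finiteness of the total Monge--Ampere mass of a bounded psh function u on D,
  using the Bedford--Taylor definition of (dd^c u)^n as the weak limit of (dd^c u_j)^n
  along smooth psh functions decreasing to u: there is a constant C bounding
  the integral of every test function 0 \<le> chi \<le> 1 with compact support in D
  against (dd^c u)^n.\<close>
definition finite_MA_mass :: "(complex^'n) set \<Rightarrow> (complex^'n \<Rightarrow> real) \<Rightarrow> bool" where
  "finite_MA_mass D u \<longleftrightarrow> (\<exists>C::real. \<forall>\<phi> K U useq.
     compact K \<and> open U \<and> K \<subseteq> U \<and> U \<subseteq> D \<and> continuous_on UNIV \<phi> \<and>
     (\<forall>z. 0 \<le> \<phi> z \<and> \<phi> z \<le> 1) \<and> (\<forall>z. z \<notin> K \<longrightarrow> \<phi> z = 0) \<and>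
     (\<forall>j. C2_on U (useq j) \<and> psh U (\<lambda>z. ereal (useq j z))) \<and>
     (\<forall>z\<in>U. (\<forall>j. useq (Suc j) z \<le> useq j z) \<and> (\<lambda>j. useq j z) \<longlonglongrightarrow> u z)
     \<longrightarrow> limsup (\<lambda>j. ereal (integral\<^sup>L lborel (\<lambda>z. \<phi> z * MA_density (useq j) z))) \<le> ereal C)"

definition E0 :: "(complex^'n) set \<Rightarrow> (complex^'n \<Rightarrow> real) set" where
  "E0 D = {u. psh D (\<lambda>z. ereal (u z)) \<and> bounded (u ` D) \<and>
              tends_to_zero_at_boundary D (\<lambda>z. ereal (u z)) \<and> finite_MA_mass D u}"

definition annulus :: "complex set" where
  "annulus = {\<zeta>. 1 < cmod \<zeta> \<and> cmod \<zeta> < exp 1}"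

definition W :: "(complex^'n) set \<Rightarrow> (complex^'n \<Rightarrow> real) \<Rightarrow> (complex^'n \<Rightarrow> real)
                 \<Rightarrow> ((complex^'n) \<times> complex \<Rightarrow> ereal) set" where
  "W D u0 u1 = {U. psh2 (D \<times> annulus) U \<and> (\<forall>p\<in>D \<times> annulus. U p \<le> 0) \<and>
     (\<forall>z\<in>D. \<forall>\<zeta>0. cmod \<zeta>0 = 1 \<longrightarrow>
         Limsup (at (z, \<zeta>0) within D \<times> annulus) U \<le> ereal (u0 z)) \<and>
     (\<forall>z\<in>D. \<forall>\<zeta>0. cmod \<zeta>0 = exp 1 \<longrightarrow>
         Limsup (at (z, \<zeta>0) within D \<times> annulus) U \<le> ereal (u1 z))}"

definition uhat :: "(complex^'n) set \<Rightarrow> (complex^'n \<Rightarrow> real) \<Rightarrow> (complex^'n \<Rightarrow> real)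
                    \<Rightarrow> (complex^'n) \<times> complex \<Rightarrow> ereal" where
  "uhat D u0 u1 p = (SUP U\<in>W D u0 u1. U p)"

definition geodesic :: "(complex^'n) set \<Rightarrow> (complex^'n \<Rightarrow> real) \<Rightarrow> (complex^'n \<Rightarrow> real)
                        \<Rightarrow> real \<Rightarrow> complex^'n \<Rightarrow> ereal" where
  "geodesic D u0 u1 t z = uhat D u0 u1 (z, complex_of_real (exp t))"

end

theory Submission
  imports Defs "HOL-Complex_Analysis.Cauchy_Integral_Formula"
begin

(* The upper bound (iii) is a maximum principle on slices: for U in W and fixed z, the function
   zeta |-> U (z, zeta) is subharmonic on the annulus with boundary values at most u0 z and u1 z,
   hence it lies below the harmonic interpolation (1 - ln |zeta|) u0 z + ln |zeta| u1 z.
   The lower bounds come from two explicit members of W, namely u0 + u1 and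
   max (u0 - M1 ln |zeta|) (u1 - M0 (1 - ln |zeta|)); that they are nonpositive uses u0, u1 <= 0,
   which is the maximum principle on D. Squeezing u_t between u0 + u1 and (1 - t) u0 + t u1 gives (i),
   and the two-sided bounds give |u_t - u0| <= (M0 + M1) t and |u_t - u1| <= (M0 + M1) (1 - t), hence (ii).
   Both maximum principles are proved by adding a small strictly subharmonic function
   (epsilon |z_i|^2, resp. epsilon |zeta|^2): at an interior maximum of the sum, the sub-mean value
   inequality would force the circle mean of the perturbation below its centre value. *)

section \<open>Circle means\<close>

lemma has_integral_cis_holomorphic:
  assumes "G holomorphic_on cball 0 1"
  shows "((\<lambda>t. G (cis t)) has_integral 2 * of_real pi * G 0) {0..2*pi}"
proof -
  have "((\<lambda>u. G u / (u - 0)) has_contour_integral 2 * of_real pi * \<i> * G 0) (circlepath 0 1)"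
    by (rule Cauchy_integral_circlepath_simple[OF assms]) simp
  then have "((\<lambda>t. G (cis t) / cis t * (\<i> * cis t)) has_integral 2 * of_real pi * \<i> * G 0) {0..2*pi}"
    unfolding circlepath_def by (subst (asm) has_contour_integral_part_circlepath_iff) auto
  from has_integral_mult_left[OF this, of "- \<i>"] show ?thesis
    by (simp add: field_simps)
qed

lemma has_integral_Re_cis_holomorphic:
  assumes "G holomorphic_on cball 0 1"
  shows "((\<lambda>t. Re (G (cis t))) has_integral 2 * pi * Re (G 0)) {0..2*pi}"
  using has_integral_Re[OF has_integral_cis_holomorphic[OF assms]] by simp

lemma has_integral_norm_sq_circle:
  fixes c w :: complex
  shows "((\<lambda>t. (cmod (c + cis t * w))\<^sup>2) has_integral 2 * pi * ((cmod c)\<^sup>2 + (cmod w)\<^sup>2)) {0..2*pi}"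
proof -
  have eq: "(cmod (c + cis t * w))\<^sup>2 = ((cmod c)\<^sup>2 + (cmod w)\<^sup>2) + 2 * Re (cnj c * w * cis t)" for t
  proof -
    have "complex_of_real ((cmod (c + cis t * w))\<^sup>2) = (c + cis t * w) * cnj (c + cis t * w)"
      by (rule complex_norm_square)
    also have "\<dots> = c * cnj c + (w * cis t) * cnj (w * cis t) + ((w * cis t) * cnj c + cnj (w * cis t) * c)"
      by (simp add: algebra_simps)
    also have "\<dots> = complex_of_real ((cmod c)\<^sup>2 + (cmod w)\<^sup>2 + 2 * Re (w * cis t * cnj c))"
      unfolding cnj_add_mult_eq_Re complex_norm_square[symmetric] by (simp add: norm_mult)
    finally show ?thesis by (simp only: of_real_eq_iff mult.commute[of w] mult.commute[of "cis t * w"]) (simp add: ac_simps)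
  qed
  have "((\<lambda>t. Re (cnj c * w * cis t)) has_integral 0) {0..2*pi}"
    using has_integral_Re_cis_holomorphic[of "\<lambda>z. cnj c * w * z"] by simp
  from has_integral_add[OF has_integral_const_real[of "(cmod c)\<^sup>2 + (cmod w)\<^sup>2" 0 "2*pi"]
      has_integral_mult_right[OF this, of 2]]
  show ?thesis by (simp add: eq)
qed

lemma has_integral_ln_norm_circle:
  fixes a b :: complex
  assumes ba: "cmod b < cmod a"
  shows "((\<lambda>t. ln (cmod (a + cis t * b))) has_integral 2 * pi * ln (cmod a)) {0..2*pi}"
proof -
  have a0: "a \<noteq> 0" using ba by auto
  have Re_pos: "0 < Re (1 + z * (b / a))" if "cmod z \<le> 1" for z
  proof -
    have "cmod (z * (b / a)) \<le> cmod b / cmod a"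
      using that by (simp add: norm_mult norm_divide mult_left_le_one_le divide_right_mono)
    also have "\<dots> < 1" using ba a0 by simp
    finally have "\<bar>Re (z * (b / a))\<bar> < 1"
      using abs_Re_le_cmod[of "z * (b / a)"] by linarith
    then show ?thesis by simp
  qed
  have "(\<lambda>z. Ln (1 + z * (b / a))) holomorphic_on cball 0 1"
    using Re_pos by (intro holomorphic_intros) (force simp: complex_nonpos_Reals_iff)
  from has_integral_Re_cis_holomorphic[OF this]
  have "((\<lambda>t. Re (Ln (1 + cis t * (b / a)))) has_integral 0) {0..2*pi}" by simp
  moreover have "Re (Ln (1 + cis t * (b / a))) = ln (cmod (a + cis t * b)) - ln (cmod a)" for t
  proof -
    have nz: "1 + cis t * (b / a) \<noteq> 0" using Re_pos[of "cis t"] by (metis less_irrefl norm_cis order_refl zero_complex.sel(1))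
    have "1 + cis t * (b / a) = (a + cis t * b) / a" using a0 by (simp add: field_simps)
    with nz a0 show ?thesis by (simp add: Re_Ln norm_divide ln_div)
  qed
  ultimately show ?thesis
    using has_integral_add[OF _ has_integral_const_real[of "ln (cmod a)" 0 "2*pi"]] by fastforce
qed

lemma circle_mean_mono:
  assumes "\<And>t. f (a + cmul (cis t) b) \<le> g (a + cmul (cis t) b)"
  shows "circle_mean cmul f a b M \<le> circle_mean cmul g a b M"
proof -
  have "(\<integral>\<^sup>+ t. e2ennreal (ereal M - g (a + cmul (cis t) b)) * indicator {0..2*pi} t \<partial>lborel)
      \<le> (\<integral>\<^sup>+ t. e2ennreal (ereal M - f (a + cmul (cis t) b)) * indicator {0..2*pi} t \<partial>lborel)"
    by (intro nn_integral_mono mult_right_mono e2ennreal_mono ereal_minus_mono order_refl assms) simp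
  then show ?thesis
    unfolding circle_mean_def
    by (intro ereal_minus_mono order_refl ereal_divide_right_mono) (simp_all add: less_eq_ennreal.rep_eq)
qed

lemma circle_mean_le_integral:
  assumes g: "(g has_integral I) {0..2*pi}"
    and le: "\<And>t. f (a + cmul (cis t) b) \<le> ereal (g t)"
    and gM: "\<And>t. g t \<le> M"
  shows "circle_mean cmul f a b M \<le> ereal (I / (2*pi))"
proof -
  have Mg: "((\<lambda>t. M - g t) has_integral 2*pi*M - I) {0..2*pi}"
    using has_integral_diff[OF has_integral_const_real[of M 0 "2*pi"] g] by simp
  have int: "(\<integral>\<^sup>+ t. ennreal (M - g t) * indicator {0..2*pi} t \<partial>lborel) = ennreal (2*pi*M - I)"
    using nn_integral_has_integral_lebesgue'[OF _ Mg] gM by auto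
  have IM: "I \<le> 2*pi*M"
    using has_integral_le[OF g has_integral_const_real[of M 0 "2*pi"]] gM by simp
  have "ennreal (2*pi*M - I)
      \<le> (\<integral>\<^sup>+ t. e2ennreal (ereal M - f (a + cmul (cis t) b)) * indicator {0..2*pi} t \<partial>lborel)"
    unfolding int[symmetric]
  proof (intro nn_integral_mono mult_right_mono)
    fix t
    have "ereal (M - g t) \<le> ereal M - f (a + cmul (cis t) b)"
      using ereal_minus_mono[OF order_refl le, of "ereal M" t] by simp
    from e2ennreal_mono[OF this] show "ennreal (M - g t) \<le> e2ennreal (ereal M - f (a + cmul (cis t) b))"
      by (simp add: e2ennreal_ereal)
  qed simp
  then have "ereal (2*pi*M - I)
      \<le> enn2ereal (\<integral>\<^sup>+ t. e2ennreal (ereal M - f (a + cmul (cis t) b)) * indicator {0..2*pi} t \<partial>lborel)"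
    using IM by (simp add: less_eq_ennreal.rep_eq)
  then have "circle_mean cmul f a b M \<le> ereal M - ereal (2*pi*M - I) / ereal (2*pi)"
    unfolding circle_mean_def by (intro ereal_minus_mono order_refl ereal_divide_right_mono) auto
  also have "\<dots> = ereal (I / (2*pi))"
    by (simp add: field_simps)
  finally show ?thesis .
qed

lemma circle_mean_eq_integral:
  assumes g: "(g has_integral I) {0..2*pi}"
    and eq: "\<And>t. f (a + cmul (cis t) b) = ereal (g t)"
    and gM: "\<And>t. g t \<le> M"
  shows "circle_mean cmul f a b M = ereal (I / (2*pi))"
proof -
  have Mg: "((\<lambda>t. M - g t) has_integral 2*pi*M - I) {0..2*pi}"
    using has_integral_diff[OF has_integral_const_real[of M 0 "2*pi"] g] by simp
  have "(\<integral>\<^sup>+ t. e2ennreal (ereal M - f (a + cmul (cis t) b)) * indicator {0..2*pi} t \<partial>lborel)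
      = (\<integral>\<^sup>+ t. ennreal (M - g t) * indicator {0..2*pi} t \<partial>lborel)"
    by (simp add: eq e2ennreal_ereal)
  also have "\<dots> = ennreal (2*pi*M - I)"
    using nn_integral_has_integral_lebesgue'[OF _ Mg] gM by auto
  finally show ?thesis
    using has_integral_le[OF g has_integral_const_real[of M 0 "2*pi"]] gM
    unfolding circle_mean_def by (simp add: field_simps)
qed

lemma psh_gen_le_circle_integral:
  assumes psh: "psh_gen cmul \<Omega> f" and disc: "\<And>\<zeta>. cmod \<zeta> \<le> 1 \<Longrightarrow> a + cmul \<zeta> b \<in> \<Omega>"
    and g: "(g has_integral I) {0..2*pi}"
    and le: "\<And>t. f (a + cmul (cis t) b) \<le> ereal (g t)" and gM: "\<And>t. g t \<le> M"
  shows "f a \<le> ereal (I / (2*pi))"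
proof -
  have "f a \<le> circle_mean cmul f a b M"
    using psh disc le gM unfolding psh_gen_def by (meson ereal_less_eq(3) order_trans)
  also have "\<dots> \<le> ereal (I / (2*pi))"
    using g le gM by (rule circle_mean_le_integral)
  finally show ?thesis .
qed

section \<open>Upper semicontinuity\<close>

lemma usc_onD:
  assumes "usc_on \<Omega> f" "x \<in> \<Omega>" "f x < y"
  shows "eventually (\<lambda>p. p \<in> \<Omega> \<longrightarrow> f p < y) (nhds x)"
proof -
  have "Limsup (at x within \<Omega>) f < y" using assms unfolding usc_on_def by (meson le_less_trans)
  then have "eventually (\<lambda>p. f p < y) (at x within \<Omega>)" by (rule Limsup_lessD)
  then have "eventually (\<lambda>p. p \<noteq> x \<longrightarrow> p \<in> \<Omega> \<longrightarrow> f p < y) (nhds x)"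
    by (simp add: eventually_at_filter)
  then show ?thesis by eventually_elim (use assms(3) in auto)
qed

lemma usc_onI:
  assumes "\<And>x y. x \<in> \<Omega> \<Longrightarrow> f x < y \<Longrightarrow> eventually (\<lambda>p. p \<in> \<Omega> \<longrightarrow> f p < y) (nhds x)"
  shows "usc_on \<Omega> f"
  unfolding usc_on_def Limsup_le_iff eventually_at_filter
  using assms by (blast intro: eventually_mono)

lemma Limsup_add_tendsto_le:
  fixes f :: "'a \<Rightarrow> ereal"
  assumes f: "Limsup F f \<le> A" and g: "(g \<longlongrightarrow> a) F"
  shows "Limsup F (\<lambda>x. f x + ereal (g x)) \<le> A + ereal a"
  unfolding Limsup_le_iff
proof (intro allI impI)
  fix y assume "A + ereal a < y"
  then have "A < y - ereal a" by (simp add: ereal_less_minus)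
  then obtain r where r: "A < ereal r" "ereal r < y - ereal a" using ereal_dense2 by blast
  then have "ereal (r + a) < y" by (simp add: ereal_less_minus flip: plus_ereal.simps(1))
  then obtain s where s: "r + a < s" "ereal s < y" using ereal_dense2 by force
  have "eventually (\<lambda>x. f x < ereal r) F" using f r(1) by (intro Limsup_lessD) auto
  moreover have "eventually (\<lambda>x. g x < a + (s - r - a)) F" using g s(1) by (intro order_tendstoD) auto
  ultimately show "eventually (\<lambda>x. f x + ereal (g x) < y) F"
  proof eventually_elim
    case (elim x)
    then have "f x + ereal (g x) \<le> ereal r + ereal (g x)" by (intro add_right_mono) simp
    also have "\<dots> < ereal s" using elim by simp
    finally show ?case using s(2) by simp
  qed
qed

lemma Limsup_compose_filterlim_le:
  fixes g :: "'b \<Rightarrow> 'c::complete_linorder"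
  assumes "filterlim h G F"
  shows "Limsup F (\<lambda>x. g (h x)) \<le> Limsup G g"
proof (subst Limsup_le_iff, intro allI impI)
  fix y assume "Limsup G g < y"
  then have "eventually (\<lambda>x. g x < y) G" by (rule Limsup_lessD)
  then show "eventually (\<lambda>x. y > g (h x)) F" using assms by (simp add: filterlim_iff) blast
qed

lemma usc_on_add_continuous:
  assumes F: "usc_on \<Omega> F" and g: "\<And>x. x \<in> \<Omega> \<Longrightarrow> isCont g x"
  shows "usc_on \<Omega> (\<lambda>p. F p + ereal (g p))"
  unfolding usc_on_def
proof
  fix x assume "x \<in> \<Omega>"
  then show "Limsup (at x within \<Omega>) (\<lambda>p. F p + ereal (g p)) \<le> F x + ereal (g x)"
    using F g by (intro Limsup_add_tendsto_le) (auto simp: usc_on_def isCont_def intro: tendsto_within_subset)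
qed

lemma usc_on_continuous:
  assumes "\<And>x. x \<in> \<Omega> \<Longrightarrow> isCont g x"
  shows "usc_on \<Omega> (\<lambda>p. ereal (g p))"
proof -
  have "usc_on \<Omega> (\<lambda>_. 0)" unfolding usc_on_def by (simp add: Limsup_bounded)
  from usc_on_add_continuous[OF this assms] show ?thesis by simp
qed

lemma usc_on_add:
  assumes f: "usc_on \<Omega> (\<lambda>p. ereal (f p))" and g: "usc_on \<Omega> (\<lambda>p. ereal (g p))"
  shows "usc_on \<Omega> (\<lambda>p. ereal (f p + g p))"
proof (rule usc_onI)
  fix x y assume x: "x \<in> \<Omega>" and lt: "ereal (f x + g x) < y"
  show "eventually (\<lambda>p. p \<in> \<Omega> \<longrightarrow> ereal (f p + g p) < y) (nhds x)"
  proof (cases y)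
    case (real y')
    define \<eta> where "\<eta> = (y' - f x - g x) / 2"
    have "\<eta> > 0" using lt real by (simp add: \<eta>_def)
    then have "eventually (\<lambda>p. p \<in> \<Omega> \<longrightarrow> ereal (f p) < ereal (f x + \<eta>)) (nhds x)"
      and "eventually (\<lambda>p. p \<in> \<Omega> \<longrightarrow> ereal (g p) < ereal (g x + \<eta>)) (nhds x)"
      using usc_onD[OF f x, of "ereal (f x + \<eta>)"] usc_onD[OF g x, of "ereal (g x + \<eta>)"] by simp_all
    then show ?thesis by eventually_elim (auto simp: real \<eta>_def field_simps)
  qed (use lt in auto)
qed

lemma usc_on_max:
  assumes "usc_on \<Omega> F" "usc_on \<Omega> G"
  shows "usc_on \<Omega> (\<lambda>p. max (F p) (G p))"
proof (rule usc_onI)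
  fix x y assume "x \<in> \<Omega>" "max (F x) (G x) < y"
  then have "eventually (\<lambda>p. p \<in> \<Omega> \<longrightarrow> F p < y) (nhds x)" "eventually (\<lambda>p. p \<in> \<Omega> \<longrightarrow> G p < y) (nhds x)"
    using usc_onD[OF assms(1)] usc_onD[OF assms(2)] by auto
  then show "eventually (\<lambda>p. p \<in> \<Omega> \<longrightarrow> max (F p) (G p) < y) (nhds x)"
    by eventually_elim auto
qed

lemma usc_on_compose:
  assumes F: "usc_on \<Omega> F" and h: "\<And>x. x \<in> \<Omega>' \<Longrightarrow> isCont h x \<and> h x \<in> \<Omega>"
  shows "usc_on \<Omega>' (\<lambda>p. F (h p))"
proof (rule usc_onI)
  fix x y assume x: "x \<in> \<Omega>'" and "F (h x) < y"
  then have "eventually (\<lambda>q. q \<in> \<Omega> \<longrightarrow> F q < y) (nhds (h x))" using usc_onD[OF F] h by blast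
  moreover have "filterlim h (nhds (h x)) (nhds x)"
    using h[OF x] by (simp add: isCont_def tendsto_at_iff_tendsto_nhds)
  ultimately have "eventually (\<lambda>p. h p \<in> \<Omega> \<longrightarrow> F (h p) < y) (nhds x)"
    by (rule eventually_compose_filterlim)
  then show "eventually (\<lambda>p. p \<in> \<Omega>' \<longrightarrow> F (h p) < y) (nhds x)"
    by eventually_elim (use h in auto)
qed

lemma usc_on_attains_max:
  fixes w :: "'a::metric_space \<Rightarrow> ereal"
  assumes C: "compact C" "A \<subseteq> C" and usc: "usc_on A w" and x0: "x0 \<in> A" "c < w x0"
    and boundary: "\<And>l. l \<in> C - A \<Longrightarrow> Limsup (at l within A) w \<le> c"
  shows "\<exists>l\<in>A. \<forall>p\<in>A. w p \<le> w l"
proof -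
  define S where "S = (SUP p\<in>A. w p)"
  obtain f where f: "incseq f" "range f \<subseteq> w ` A" "S = Sup (range f)"
    using Sup_countable_SUP[of "w ` A"] x0 unfolding S_def by auto
  have "\<exists>x. x \<in> A \<and> w x = f k" for k using range_subsetD[OF f(2), of k] by (metis imageE)
  then obtain xs where xs: "\<And>k. xs k \<in> A" "\<And>k. w (xs k) = f k" by metis
  have "\<forall>k. xs k \<in> C" using xs(1) C(2) by blast
  then obtain l r where lr: "l \<in> C" "strict_mono r" "(xs \<circ> r) \<longlonglongrightarrow> l"
    by (rule seq_compactE[OF compact_imp_seq_compact[OF C(1)]])
  have wS: "(\<lambda>k. w (xs (r k))) \<longlonglongrightarrow> S"
    using LIMSEQ_subseq_LIMSEQ[OF LIMSEQ_SUP[OF f(1)] lr(2)] xs(2) f(3) by (simp add: o_def)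
  have "w x0 \<le> S" unfolding S_def using x0 by (simp add: SUP_upper)
  have S_le: "S \<le> y" if "eventually (\<lambda>p. p \<in> A \<longrightarrow> w p < y) (nhds l)" for y
  proof -
    have "eventually (\<lambda>k. xs (r k) \<in> A \<longrightarrow> w (xs (r k)) < y) sequentially"
      using eventually_compose_filterlim[OF that lr(3)] by (simp add: o_def)
    then have "eventually (\<lambda>k. w (xs (r k)) \<le> y) sequentially"
      by eventually_elim (use xs(1) in auto)
    then show "S \<le> y" by (rule tendsto_le[OF trivial_limit_sequentially tendsto_const wS])
  qed
  have "l \<in> A"
  proof (rule ccontr)
    assume l: "l \<notin> A"
    obtain y where y: "c < y" "y < w x0" using dense[OF x0(2)] by blast
    have "Limsup (at l within A) w < y" using boundary[of l] l lr(1) y(1) by simp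
    then have "eventually (\<lambda>p. w p < y) (at l within A)" by (rule Limsup_lessD)
    then have "eventually (\<lambda>p. p \<in> A \<longrightarrow> w p < y) (nhds l)"
      unfolding eventually_at_filter by eventually_elim (use l in auto)
    from S_le[OF this] y(2) \<open>w x0 \<le> S\<close> show False by simp
  qed
  have "S \<le> w l"
  proof (rule dense_ge)
    fix y assume "w l < y"
    then show "S \<le> y" by (rule S_le[OF usc_onD[OF usc \<open>l \<in> A\<close>]])
  qed
  moreover have "\<forall>p\<in>A. w p \<le> S" unfolding S_def by (simp add: SUP_upper)
  ultimately show ?thesis using \<open>l \<in> A\<close> by (meson order_trans)
qed

lemma usc_on_UNIV_borel_measurable:
  assumes "usc_on UNIV f"
  shows "f \<in> borel_measurable borel"
proof (rule borel_measurableI_less)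
  fix y
  have "open {x. f x < y}"
    unfolding open_subopen[of "{x. f x < y}"]
  proof
    fix x assume "x \<in> {x. f x < y}"
    then have "eventually (\<lambda>p. f p < y) (nhds x)" using usc_onD[OF assms UNIV_I, of x y] by simp
    then show "\<exists>T. open T \<and> x \<in> T \<and> T \<subseteq> {x. f x < y}" unfolding eventually_nhds by blast
  qed
  then show "{x \<in> space borel. f x < y} \<in> sets borel" by simp
qed

lemma usc_on_bounded_integrable_on_path:
  fixes a b :: real
  assumes usc: "usc_on \<Omega> (\<lambda>p. ereal (F p))" and \<gamma>: "continuous_on UNIV \<gamma>"
    and inn: "\<And>t. \<gamma> t \<in> \<Omega>" and bd: "\<And>p. p \<in> \<Omega> \<Longrightarrow> \<bar>F p\<bar> \<le> B"
  shows "(\<lambda>t. F (\<gamma> t)) integrable_on {a..b}"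
proof -
  have "usc_on UNIV (\<lambda>t. ereal (F (\<gamma> t)))"
    using \<gamma> inn by (intro usc_on_compose[OF usc]) (simp add: continuous_on_eq_continuous_at)
  then have "(\<lambda>t. ereal (F (\<gamma> t))) \<in> borel_measurable borel"
    by (rule usc_on_UNIV_borel_measurable)
  then have "(\<lambda>t. F (\<gamma> t)) \<in> borel_measurable lborel" by simp
  then have "(\<lambda>t. F (\<gamma> t)) \<in> borel_measurable lebesgue" by (rule measurable_completion)
  then have "(\<lambda>t. F (\<gamma> t)) \<in> borel_measurable (lebesgue_on {a..b})"
    by (rule measurable_restrict_space1)
  then show ?thesis
    by (rule measurable_bounded_by_integrable_imp_integrable[OF _ integrable_const_ivl[of B a b]])
       (use bd inn in auto)
qed

section \<open>Operations on plurisubharmonic functions\<close>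

lemma psh_gen_max:
  assumes f: "psh_gen cmul \<Omega> f" and g: "psh_gen cmul \<Omega> g"
  shows "psh_gen cmul \<Omega> (\<lambda>p. max (f p) (g p))"
  unfolding psh_gen_def
proof (intro conjI ballI allI impI)
  show "open \<Omega>" "usc_on \<Omega> (\<lambda>p. max (f p) (g p))"
    using f g by (auto simp: psh_gen_def intro: usc_on_max)
  show "\<And>x. x \<in> \<Omega> \<Longrightarrow> max (f x) (g x) < \<infinity>"
    using f g unfolding psh_gen_def by (metis max_def)
next
  fix a b M
  assume disc: "\<forall>\<zeta>. cmod \<zeta> \<le> 1 \<longrightarrow> a + cmul \<zeta> b \<in> \<Omega>"
    and M: "\<forall>t. max (f (a + cmul (cis t) b)) (g (a + cmul (cis t) b)) \<le> ereal M"
  have "f a \<le> circle_mean cmul f a b M" "g a \<le> circle_mean cmul g a b M"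
    using f g disc M unfolding psh_gen_def by auto
  moreover have "circle_mean cmul f a b M \<le> circle_mean cmul (\<lambda>p. max (f p) (g p)) a b M"
    and "circle_mean cmul g a b M \<le> circle_mean cmul (\<lambda>p. max (f p) (g p)) a b M"
    by (intro circle_mean_mono; simp)+
  ultimately show "max (f a) (g a) \<le> circle_mean cmul (\<lambda>p. max (f p) (g p)) a b M"
    by (meson max.boundedI order_trans)
qed

lemma psh_gen_real_le_circle_integral:
  assumes cont: "continuous_on UNIV (\<lambda>t. a + cmul (cis t) b)"
    and psh: "psh_gen cmul \<Omega> (\<lambda>p. ereal (f p))" and bd: "\<And>p. p \<in> \<Omega> \<Longrightarrow> \<bar>f p\<bar> \<le> B"
    and disc: "\<forall>\<zeta>. cmod \<zeta> \<le> 1 \<longrightarrow> a + cmul \<zeta> b \<in> \<Omega>"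
  shows "(\<lambda>t. f (a + cmul (cis t) b)) integrable_on {0..2*pi}"
    and "f a \<le> integral {0..2*pi} (\<lambda>t. f (a + cmul (cis t) b)) / (2*pi)"
proof -
  have on_circle: "a + cmul (cis t) b \<in> \<Omega>" for t using disc by simp
  have "usc_on \<Omega> (\<lambda>p. ereal (f p))" using psh by (simp add: psh_gen_def)
  then show int: "(\<lambda>t. f (a + cmul (cis t) b)) integrable_on {0..2*pi}"
    using cont on_circle bd by (rule usc_on_bounded_integrable_on_path)
  have "ereal (f a) \<le> ereal (integral {0..2*pi} (\<lambda>t. f (a + cmul (cis t) b)) / (2*pi))"
    by (rule psh_gen_le_circle_integral[OF psh _ integrable_integral[OF int], where M=B])
      (use disc bd on_circle in \<open>auto simp: abs_le_iff\<close>)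
  then show "f a \<le> integral {0..2*pi} (\<lambda>t. f (a + cmul (cis t) b)) / (2*pi)" by simp
qed

lemma psh_gen_add:
  assumes cont: "\<And>a b. continuous_on UNIV (\<lambda>t. a + cmul (cis t) b)"
    and f: "psh_gen cmul \<Omega> (\<lambda>p. ereal (f p))" and g: "psh_gen cmul \<Omega> (\<lambda>p. ereal (g p))"
    and bf: "\<And>p. p \<in> \<Omega> \<Longrightarrow> \<bar>f p\<bar> \<le> B" and bg: "\<And>p. p \<in> \<Omega> \<Longrightarrow> \<bar>g p\<bar> \<le> B"
  shows "psh_gen cmul \<Omega> (\<lambda>p. ereal (f p + g p))"
  unfolding psh_gen_def
proof (intro conjI ballI allI impI)
  show "open \<Omega>" "usc_on \<Omega> (\<lambda>p. ereal (f p + g p))"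
    using f g by (auto simp: psh_gen_def intro: usc_on_add)
next
  fix a b M
  assume disc: "\<forall>\<zeta>. cmod \<zeta> \<le> 1 \<longrightarrow> a + cmul \<zeta> b \<in> \<Omega>"
    and M: "\<forall>t. ereal (f (a + cmul (cis t) b) + g (a + cmul (cis t) b)) \<le> ereal M"
  note F = psh_gen_real_le_circle_integral[OF cont f bf disc]
  note G = psh_gen_real_le_circle_integral[OF cont g bg disc]
  have "circle_mean cmul (\<lambda>p. ereal (f p + g p)) a b M
      = ereal ((integral {0..2*pi} (\<lambda>t. f (a + cmul (cis t) b))
               + integral {0..2*pi} (\<lambda>t. g (a + cmul (cis t) b))) / (2*pi))"
    using M by (intro circle_mean_eq_integral[where g="\<lambda>t. f (a + cmul (cis t) b) + g (a + cmul (cis t) b)"]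
        has_integral_add integrable_integral F(1) G(1)) auto
  then show "ereal (f a + g a) \<le> circle_mean cmul (\<lambda>p. ereal (f p + g p)) a b M"
    using F(2) G(2) by (simp add: add_divide_distrib)
qed simp

lemma continuous_on_circle_pair:
  "continuous_on UNIV (\<lambda>t. a + cmul_pair (cis t) b)"
  unfolding cmul_pair_def vector_scalar_mult_def plus_prod_def
  by (intro continuous_intros continuous_on_Pair) 

lemma psh2_compose_fst:
  fixes D :: "(complex^'n) set"
  assumes u: "psh D u" and A: "open A"
  shows "psh2 (D \<times> A) (\<lambda>p. u (fst p))"
  unfolding psh_gen_def
proof (intro conjI ballI allI impI)
  have "open D" "usc_on D u" "\<And>z. z \<in> D \<Longrightarrow> u z < \<infinity>"
    using u by (simp_all add: psh_gen_def)
  then show "open (D \<times> A)" "usc_on (D \<times> A) (\<lambda>p. u (fst p))" "\<And>p. p \<in> D \<times> A \<Longrightarrow> u (fst p) < \<infinity>"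
    using A by (auto intro: open_Times usc_on_compose[where \<Omega>=D] isCont_fst)
next
  fix a b :: "(complex^'n) \<times> complex" and M
  assume "\<forall>\<zeta>. cmod \<zeta> \<le> 1 \<longrightarrow> a + cmul_pair \<zeta> b \<in> D \<times> A"
    and "\<forall>t. u (fst (a + cmul_pair (cis t) b)) \<le> ereal M"
  then have "u (fst a) \<le> circle_mean (\<lambda>c v. c *s v) u (fst a) (fst b) M"
    using u unfolding psh_gen_def by (auto simp: cmul_pair_def mem_Times_iff)
  then show "u (fst a) \<le> circle_mean cmul_pair (\<lambda>p. u (fst p)) a b M"
    by (simp add: circle_mean_def cmul_pair_def)
qed

lemma norm_less_if_disc_avoids_zero:
  fixes a b :: complex
  assumes "\<And>\<zeta>. cmod \<zeta> \<le> 1 \<Longrightarrow> a + \<zeta> * b \<noteq> 0"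
  shows "cmod b < cmod a"
proof (rule ccontr)
  assume "\<not> cmod b < cmod a"
  moreover have "a \<noteq> 0" using assms[of 0] by simp
  ultimately have "cmod (- a / b) \<le> 1" "b \<noteq> 0" by (auto simp: norm_divide divide_le_eq_1)
  with assms[of "- a / b"] show False by simp
qed

lemma psh2_ln_norm_snd:
  fixes D :: "(complex^'n) set"
  assumes D: "open D" and A: "open A" "0 \<notin> A"
  shows "psh2 (D \<times> A) (\<lambda>p. ereal (c * ln (cmod (snd p)) + d))"
  unfolding psh_gen_def
proof (intro conjI ballI allI impI)
  show "open (D \<times> A)" using D A(1) by (rule open_Times)
  show "usc_on (D \<times> A) (\<lambda>p. ereal (c * ln (cmod (snd p)) + d))"
    using A(2) by (intro usc_on_continuous continuous_intros) (auto simp: mem_Times_iff)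
next
  fix a b :: "(complex^'n) \<times> complex" and M
  assume disc: "\<forall>\<zeta>. cmod \<zeta> \<le> 1 \<longrightarrow> a + cmul_pair \<zeta> b \<in> D \<times> A"
    and M: "\<forall>t. ereal (c * ln (cmod (snd (a + cmul_pair (cis t) b))) + d) \<le> ereal M"
  have "cmod (snd b) < cmod (snd a)"
    using disc A(2) by (intro norm_less_if_disc_avoids_zero) (force simp: cmul_pair_def mem_Times_iff)
  from has_integral_add[OF has_integral_mult_right[OF has_integral_ln_norm_circle[OF this], of c]
      has_integral_const_real[of d 0 "2*pi"]]
  have "((\<lambda>t. c * ln (cmod (snd a + cis t * snd b)) + d) has_integral 2 * pi * (c * ln (cmod (snd a)) + d)) {0..2*pi}"
    by (simp add: algebra_simps)
  then have "circle_mean cmul_pair (\<lambda>p. ereal (c * ln (cmod (snd p)) + d)) a b M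
      = ereal (c * ln (cmod (snd a)) + d)"
    using M by (subst circle_mean_eq_integral) (auto simp: cmul_pair_def)
  then show "ereal (c * ln (cmod (snd a)) + d) \<le> circle_mean cmul_pair (\<lambda>p. ereal (c * ln (cmod (snd p)) + d)) a b M"
    by simp
qed simp

lemma psh2_slice_snd:
  assumes U: "psh2 (D \<times> A) U" and z: "z \<in> D"
  shows "psh_gen (*) A (\<lambda>q. U (z, q))"
  unfolding psh_gen_def
proof (intro conjI ballI allI impI)
  have "snd ` (D \<times> A) = A" using z by force
  then show "open A" using U open_image_snd unfolding psh_gen_def by metis
  show "usc_on A (\<lambda>q. U (z, q))" "\<And>q. q \<in> A \<Longrightarrow> U (z, q) < \<infinity>"
    using U z unfolding psh_gen_def by (auto intro!: usc_on_compose[where \<Omega>="D \<times> A"])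
next
  fix a b M
  assume "\<forall>\<zeta>. cmod \<zeta> \<le> 1 \<longrightarrow> a + \<zeta> * b \<in> A" and "\<forall>t. U (z, a + cis t * b) \<le> ereal M"
  then have "U (z, a) \<le> circle_mean cmul_pair U (z, a) (0, b) M"
    using U z unfolding psh_gen_def by (auto simp: cmul_pair_def)
  then show "U (z, a) \<le> circle_mean (*) (\<lambda>q. U (z, q)) a b M"
    by (simp add: circle_mean_def cmul_pair_def)
qed

section \<open>The maximum principle\<close>

lemma psh_gen_max_point_circle_integral_le:
  assumes psh: "psh_gen cmul \<Omega> v" and l: "l \<in> \<Omega>" "v l \<noteq> -\<infinity>"
    and max: "\<And>p. p \<in> \<Omega> \<Longrightarrow> v p + ereal (g p) \<le> v l + ereal (g l)"
    and disc: "\<And>\<zeta>. cmod \<zeta> \<le> 1 \<Longrightarrow> l + cmul \<zeta> b \<in> \<Omega>"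
    and g: "((\<lambda>t. g (l + cmul (cis t) b)) has_integral I) {0..2*pi}"
    and gm: "\<And>p. p \<in> \<Omega> \<Longrightarrow> m \<le> g p"
  shows "I \<le> 2 * pi * g l"
proof -
  obtain S where S: "v l = ereal S"
    using l psh by (cases "v l") (auto simp: psh_gen_def)
  let ?G = "\<lambda>t. S + g l - g (l + cmul (cis t) b)"
  have G: "(?G has_integral 2*pi*(S + g l) - I) {0..2*pi}"
    using has_integral_diff[OF has_integral_const_real[of "S + g l" 0 "2*pi"] g] by simp
  have le: "v (l + cmul (cis t) b) \<le> ereal (?G t)" for t
    using max[OF disc[of "cis t"]] S by (cases "v (l + cmul (cis t) b)") simp_all
  have GM: "?G t \<le> S + g l - m" for t using gm[OF disc[of "cis t"]] by simp
  have "v l \<le> ereal ((2*pi*(S + g l) - I) / (2*pi))"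
    by (rule psh_gen_le_circle_integral[OF psh disc G le GM])
  then show ?thesis using S by (simp add: field_simps)
qed

lemma psh_gen_weak_maximum_principle:
  fixes \<Omega> :: "'a::{real_normed_vector,heine_borel} set"
  assumes psh: "psh_gen cmul \<Omega> v" and bdd: "bounded \<Omega>"
    and cont: "\<And>x. x \<in> \<Omega> \<Longrightarrow> isCont g x" and gm: "\<And>x. x \<in> \<Omega> \<Longrightarrow> m \<le> g x"
    and strict: "\<And>l. l \<in> \<Omega> \<Longrightarrow> \<exists>b I. (\<forall>\<zeta>. cmod \<zeta> \<le> 1 \<longrightarrow> l + cmul \<zeta> b \<in> \<Omega>) \<and>
                 ((\<lambda>t. g (l + cmul (cis t) b)) has_integral I) {0..2*pi} \<and> 2 * pi * g l < I"
    and boundary: "\<And>x. x \<in> closure \<Omega> - \<Omega> \<Longrightarrow> Limsup (at x within \<Omega>) (\<lambda>p. v p + ereal (g p)) \<le> ereal c"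
    and p: "p \<in> \<Omega>"
  shows "v p + ereal (g p) \<le> ereal c"
proof (rule ccontr)
  assume "\<not> v p + ereal (g p) \<le> ereal c"
  then have pc: "ereal c < v p + ereal (g p)" by simp
  have "usc_on \<Omega> (\<lambda>p. v p + ereal (g p))"
    using psh cont by (intro usc_on_add_continuous) (auto simp: psh_gen_def)
  then obtain l where l: "l \<in> \<Omega>" and max: "\<And>q. q \<in> \<Omega> \<Longrightarrow> v q + ereal (g q) \<le> v l + ereal (g l)"
    using usc_on_attains_max[OF _ closure_subset _ p pc boundary] bdd by (auto simp: compact_closure)
  have "v l \<noteq> -\<infinity>" using max[OF p] pc by auto
  obtain b I where disc: "\<forall>\<zeta>. cmod \<zeta> \<le> 1 \<longrightarrow> l + cmul \<zeta> b \<in> \<Omega>"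
    and I: "((\<lambda>t. g (l + cmul (cis t) b)) has_integral I) {0..2*pi}" "2 * pi * g l < I"
    using strict[OF l] by blast
  have "I \<le> 2 * pi * g l"
    by (rule psh_gen_max_point_circle_integral_le[OF psh l \<open>v l \<noteq> -\<infinity>\<close> max _ I(1) gm])
      (use disc in auto)
  with I(2) show False by simp
qed

lemma Limsup_le_zero_if_tends_to_zero_at_boundary:
  fixes D :: "'a::t2_space set"
  assumes f: "tends_to_zero_at_boundary D f" and x: "x \<notin> D"
  shows "Limsup (at x within D) f \<le> 0"
proof (subst Limsup_le_iff, intro allI impI)
  fix y :: ereal assume "0 < y"
  then obtain \<epsilon> where \<epsilon>: "0 < ereal \<epsilon>" "ereal \<epsilon> < y" using ereal_dense2 by blast
  then obtain K where K: "compact K" "K \<subseteq> D" "\<forall>z\<in>D - K. \<bar>f z\<bar> < ereal \<epsilon>"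
    using f unfolding tends_to_zero_at_boundary_def by (meson ereal_less(2))
  have "open (- K)" using K(1) by (simp add: compact_imp_closed open_Compl)
  then have "eventually (\<lambda>p. p \<in> - K) (nhds x)"
    using K(2) x by (intro eventually_nhds_in_open) auto
  then have "eventually (\<lambda>p. p \<in> - K) (at x within D)"
    by (rule filter_leD[OF at_within_le_nhds])
  moreover have "eventually (\<lambda>p. p \<in> D) (at x within D)"
    by (simp add: eventually_at_filter)
  ultimately show "eventually (\<lambda>p. y > f p) (at x within D)"
  proof eventually_elim
    case (elim p)
    then have "\<bar>f p\<bar> < ereal \<epsilon>" using K(3) by blast
    then have "f p < ereal \<epsilon>" by (metis abs_ereal_ge0 abs_ereal_pos leI nless_le order.trans)
    then show ?case using \<epsilon>(2) by simp
  qed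
qed

lemma norm_axis: "norm (axis i x :: 'a::real_normed_vector^'n) = norm x"
  by (simp add: norm_vec_def L2_set_def axis_def if_distrib[of norm] if_distrib[of power2] cong: if_cong)

lemma psh_nonpos_if_tends_to_zero_at_boundary:
  fixes D :: "(complex^'n) set" and u :: "complex^'n \<Rightarrow> ereal"
  assumes psh: "psh D u" and bdd: "bounded D" and zero: "tends_to_zero_at_boundary D u"
    and z: "z \<in> D"
  shows "u z \<le> 0"
proof (rule ereal_le_epsilon2)
  fix e :: real assume "0 < e"
  obtain R where R: "R > 0" "\<And>x. x \<in> closure D \<Longrightarrow> norm x \<le> R"
    using bdd bounded_closure bounded_pos by metis
  define i :: 'n where "i = undefined"
  define \<epsilon> where "\<epsilon> = e / R\<^sup>2"
  have "\<epsilon> > 0" using \<open>0 < e\<close> R(1) by (simp add: \<epsilon>_def)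
  define g where "g x = \<epsilon> * (cmod (x $ i))\<^sup>2" for x :: "complex^'n"
  have g_le: "g x \<le> e" if "x \<in> closure D" for x
  proof -
    have "cmod (x $ i) \<le> R" by (rule order_trans[OF Finite_Cartesian_Product.norm_nth_le R(2)[OF that]])
    then have "g x \<le> \<epsilon> * R\<^sup>2" unfolding g_def using \<open>\<epsilon> > 0\<close> by (simp add: power_mono)
    then show ?thesis using R(1) by (simp add: \<epsilon>_def)
  qed
  have "u z + ereal (g z) \<le> ereal e"
  proof (rule psh_gen_weak_maximum_principle[OF psh bdd _ _ _ _ z, where m=0])
    show "isCont g x" for x unfolding g_def by (intro continuous_intros)
    show "0 \<le> g x" for x unfolding g_def using \<open>\<epsilon> > 0\<close> by simp
  next
    fix l assume "l \<in> D"
    then obtain r where r: "r > 0" "ball l r \<subseteq> D" using psh openE unfolding psh_gen_def by metis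
    let ?b = "axis i (complex_of_real (r/2))"
    have "l + \<zeta> *s ?b \<in> D" if "cmod \<zeta> \<le> 1" for \<zeta>
    proof -
      have "\<zeta> *s ?b = axis i (\<zeta> * complex_of_real (r/2))" by (simp add: vec_eq_iff axis_def)
      then have "norm (\<zeta> *s ?b) \<le> r/2"
        using that r(1) by (simp add: norm_axis norm_mult mult_left_le_one_le)
      then show ?thesis using r by (auto simp: dist_norm subset_iff)
    qed
    moreover have "((\<lambda>t. g (l + cis t *s ?b)) has_integral 2 * pi * (g l + \<epsilon> * (r/2)\<^sup>2)) {0..2*pi}"
      using has_integral_mult_right[OF has_integral_norm_sq_circle[of "l $ i" "complex_of_real (r/2)"], of \<epsilon>] r(1)
      by (simp add: g_def algebra_simps)
    moreover have "2 * pi * g l < 2 * pi * (g l + \<epsilon> * (r/2)\<^sup>2)"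
      using \<open>\<epsilon> > 0\<close> r(1) by simp
    ultimately show "\<exists>b I. (\<forall>\<zeta>. cmod \<zeta> \<le> 1 \<longrightarrow> l + \<zeta> *s b \<in> D) \<and>
        ((\<lambda>t. g (l + cis t *s b)) has_integral I) {0..2*pi} \<and> 2 * pi * g l < I"
      by blast
  next
    fix x assume x: "x \<in> closure D - D"
    have "Limsup (at x within D) (\<lambda>p. u p + ereal (g p)) \<le> 0 + ereal (g x)"
      using Limsup_le_zero_if_tends_to_zero_at_boundary[OF zero] x
      by (intro Limsup_add_tendsto_le) (auto simp: g_def intro!: tendsto_intros)
    also have "\<dots> \<le> ereal e" using g_le x by simp
    finally show "Limsup (at x within D) (\<lambda>p. u p + ereal (g p)) \<le> ereal e" .
  qed
  moreover have "0 \<le> g z" unfolding g_def using \<open>\<epsilon> > 0\<close> by simp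
  ultimately show "u z \<le> 0 + ereal e"
    by (cases "u z") auto
qed

lemma E0_psh: "u \<in> E0 D \<Longrightarrow> psh D (\<lambda>z. ereal (u z))"
  by (simp add: E0_def)

lemma E0_usc: "u \<in> E0 D \<Longrightarrow> usc_on D (\<lambda>z. ereal (u z))"
  by (simp add: E0_def psh_gen_def)

lemma E0_bounded: "u \<in> E0 D \<Longrightarrow> \<exists>B. \<forall>z\<in>D. \<bar>u z\<bar> \<le> B"
  by (auto simp: E0_def bounded_iff)

lemma E0_nonpos:
  assumes "u \<in> E0 D" "bounded D" "z \<in> D"
  shows "u z \<le> 0"
  using psh_nonpos_if_tends_to_zero_at_boundary[of D "\<lambda>z. ereal (u z)"] assms by (simp add: E0_def)

lemma ln_norm_annulus:
  assumes "q \<in> annulus"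
  shows "0 < ln (cmod q)" "ln (cmod q) < 1"
proof -
  have "1 < cmod q" "cmod q < exp 1" using assms by (simp_all add: annulus_def)
  moreover have "q \<noteq> 0" using assms by (auto simp: annulus_def)
  ultimately show "0 < ln (cmod q)" "ln (cmod q) < 1"
    using ln_less_cancel_iff[of "cmod q" "exp 1"] by (simp_all add: ln_gt_zero)
qed

lemma open_annulus: "open annulus"
  unfolding annulus_def by (intro open_Collect_conj open_Collect_less continuous_intros)

lemma bounded_annulus: "bounded annulus"
  unfolding annulus_def bounded_iff by (auto intro: less_imp_le)

lemma frontier_annulus_subset:
  "closure annulus - annulus \<subseteq> {q. cmod q = 1 \<or> cmod q = exp 1}"
proof -
  have "closure annulus \<subseteq> {q. 1 \<le> cmod q \<and> cmod q \<le> exp 1}"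
    by (rule closure_minimal) (auto simp: annulus_def intro!: closed_Collect_conj closed_Collect_le continuous_intros)
  then show ?thesis by (auto simp: annulus_def)
qed

lemma subharmonic_annulus_le_interpolation:
  assumes v: "psh_gen (*) annulus v"
    and inner: "\<And>\<zeta>0. cmod \<zeta>0 = 1 \<Longrightarrow> Limsup (at \<zeta>0 within annulus) v \<le> ereal A"
    and outer: "\<And>\<zeta>0. cmod \<zeta>0 = exp 1 \<Longrightarrow> Limsup (at \<zeta>0 within annulus) v \<le> ereal B"
    and \<zeta>: "\<zeta> \<in> annulus"
  shows "v \<zeta> \<le> ereal (A * (1 - ln (cmod \<zeta>)) + B * ln (cmod \<zeta>))"
proof (rule ereal_le_epsilon2)
  fix e :: real assume "0 < e"
  define \<epsilon> where "\<epsilon> = e / (exp 1)\<^sup>2"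
  have "\<epsilon> > 0" using \<open>0 < e\<close> by (simp add: \<epsilon>_def)
  define h where "h q = A * (1 - ln (cmod q)) + B * ln (cmod q)" for q :: complex
  define g where "g q = \<epsilon> * (cmod q)\<^sup>2 - h q" for q
  have "v \<zeta> + ereal (g \<zeta>) \<le> ereal e"
  proof (rule psh_gen_weak_maximum_principle[OF v bounded_annulus _ _ _ _ \<zeta>, where m="- (\<bar>A\<bar> + \<bar>B\<bar>)"])
    show "isCont g q" if "q \<in> annulus" for q
      using that unfolding g_def h_def annulus_def by (intro continuous_intros) auto
    show "- (\<bar>A\<bar> + \<bar>B\<bar>) \<le> g q" if "q \<in> annulus" for q
    proof -
      have "h q \<le> \<bar>A\<bar> + \<bar>B\<bar>"
        using ln_norm_annulus[OF that] unfolding h_def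
        by (smt (verit, best) mult_left_le mult_nonneg_nonneg abs_ge_self abs_ge_zero mult_right_mono)
      then show ?thesis unfolding g_def using \<open>\<epsilon> > 0\<close> by (smt (verit) zero_le_mult_iff zero_le_power2)
    qed
  next
    fix l assume l: "l \<in> annulus"
    then obtain r where r: "r > 0" "ball l r \<subseteq> annulus" using open_annulus openE by metis
    let ?b = "complex_of_real (r/2)"
    have disc: "l + \<zeta> * ?b \<in> annulus" if "cmod \<zeta> \<le> 1" for \<zeta>
    proof -
      have "cmod (\<zeta> * ?b) \<le> r/2" using that r(1) by (simp add: norm_mult mult_left_le_one_le)
      then show ?thesis using r by (auto simp: dist_norm subset_iff)
    qed
    have "0 \<notin> annulus" by (simp add: annulus_def)
    then have "0 \<notin> ball l r" using r(2) by blast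
    then have "cmod ?b < cmod l" using r(1) by (simp add: dist_norm)
    from has_integral_diff[OF has_integral_mult_right[OF has_integral_norm_sq_circle[of l ?b], of \<epsilon>]
        has_integral_add[OF has_integral_const_real[of A 0 "2*pi"]
          has_integral_mult_right[OF has_integral_ln_norm_circle[OF this], of "B - A"]]]
    have "((\<lambda>t. g (l + cis t * ?b)) has_integral 2 * pi * (g l + \<epsilon> * (r/2)\<^sup>2)) {0..2*pi}"
      using r(1) by (simp add: g_def h_def algebra_simps)
    moreover have "2 * pi * g l < 2 * pi * (g l + \<epsilon> * (r/2)\<^sup>2)"
      using \<open>\<epsilon> > 0\<close> r(1) by simp
    ultimately show "\<exists>b I. (\<forall>\<zeta>. cmod \<zeta> \<le> 1 \<longrightarrow> l + \<zeta> * b \<in> annulus) \<and>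
        ((\<lambda>t. g (l + cis t * b)) has_integral I) {0..2*pi} \<and> 2 * pi * g l < I"
      using disc by blast
  next
    fix x assume x: "x \<in> closure annulus - annulus"
    have g: "(g \<longlongrightarrow> g x) (at x within annulus)"
      using x frontier_annulus_subset unfolding g_def h_def
      by (intro tendsto_intros) auto
    consider "cmod x = 1" | "cmod x = exp 1" using x frontier_annulus_subset by blast
    then show "Limsup (at x within annulus) (\<lambda>p. v p + ereal (g p)) \<le> ereal e"
    proof cases
      case 1
      have "Limsup (at x within annulus) (\<lambda>p. v p + ereal (g p)) \<le> ereal A + ereal (g x)"
        by (rule Limsup_add_tendsto_le[OF inner[OF 1] g])
      also have "\<dots> \<le> ereal e"
        using 1 \<open>\<epsilon> > 0\<close> by (simp add: g_def h_def \<epsilon>_def field_simps)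
      finally show ?thesis .
    next
      case 2
      have "Limsup (at x within annulus) (\<lambda>p. v p + ereal (g p)) \<le> ereal B + ereal (g x)"
        by (rule Limsup_add_tendsto_le[OF outer[OF 2] g])
      also have "\<dots> = ereal e"
        using 2 by (simp add: g_def h_def \<epsilon>_def)
      finally show ?thesis by simp
    qed
  qed
  moreover have "- g \<zeta> \<le> h \<zeta>" using \<open>\<epsilon> > 0\<close> by (simp add: g_def)
  ultimately show "v \<zeta> \<le> ereal (A * (1 - ln (cmod \<zeta>)) + B * ln (cmod \<zeta>)) + ereal e"
    unfolding h_def[symmetric] by (cases "v \<zeta>") auto
qed

section \<open>Members of W\<close>

lemma Limsup_slice_le:
  fixes U :: "'a::topological_space \<times> 'b::topological_space \<Rightarrow> 'c::complete_linorder"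
  assumes z: "z \<in> D"
  shows "Limsup (at \<zeta>0 within A) (\<lambda>q. U (z, q)) \<le> Limsup (at (z, \<zeta>0) within D \<times> A) U"
proof (rule Limsup_compose_filterlim_le[where h="Pair z" and g=U])
  show "filterlim (Pair z) (at (z, \<zeta>0) within D \<times> A) (at \<zeta>0 within A)"
    using z unfolding filterlim_at
    by (auto simp: eventually_at_filter intro!: tendsto_Pair tendsto_const tendsto_ident_at)
qed

lemma W_le_interpolation:
  assumes U: "U \<in> W D u0 u1" and z: "z \<in> D" and \<zeta>: "\<zeta> \<in> annulus"
  shows "U (z, \<zeta>) \<le> ereal (u0 z * (1 - ln (cmod \<zeta>)) + u1 z * ln (cmod \<zeta>))"
proof (rule subharmonic_annulus_le_interpolation[OF _ _ _ \<zeta>])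
  show "psh_gen (*) annulus (\<lambda>q. U (z, q))"
    using U z unfolding W_def by (blast intro: psh2_slice_snd)
  show "Limsup (at \<zeta>0 within annulus) (\<lambda>q. U (z, q)) \<le> ereal (u0 z)" if "cmod \<zeta>0 = 1" for \<zeta>0
    using U z that unfolding W_def by (blast intro: order_trans[OF Limsup_slice_le])
  show "Limsup (at \<zeta>0 within annulus) (\<lambda>q. U (z, q)) \<le> ereal (u1 z)" if "cmod \<zeta>0 = exp 1" for \<zeta>0
    using U z that unfolding W_def by (blast intro: order_trans[OF Limsup_slice_le])
qed

lemma Limsup_le_usc_fst_add_continuous_snd:
  assumes u: "usc_on D (\<lambda>z. ereal (u z))" and z: "z \<in> D"
    and le: "\<And>p. p \<in> D \<times> A \<Longrightarrow> V p \<le> u (fst p) + h (snd p)" and h: "isCont h \<zeta>0"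
  shows "Limsup (at (z, \<zeta>0) within D \<times> A) (\<lambda>p. ereal (V p)) \<le> ereal (u z + h \<zeta>0)"
proof -
  have "Limsup (at (z, \<zeta>0) within D \<times> A) (\<lambda>p. ereal (V p))
      \<le> Limsup (at (z, \<zeta>0) within D \<times> A) (\<lambda>p. ereal (u (fst p)) + ereal (h (snd p)))"
    using le by (intro Limsup_mono) (auto simp: eventually_at_filter)
  also have "\<dots> \<le> ereal (u z) + ereal (h \<zeta>0)"
  proof (rule Limsup_add_tendsto_le)
    show "Limsup (at (z, \<zeta>0) within D \<times> A) (\<lambda>p. ereal (u (fst p))) \<le> ereal (u z)"
    proof (subst Limsup_le_iff, intro allI impI)
      fix y assume "ereal (u z) < y"
      with usc_onD[OF u z] have "eventually (\<lambda>q. q \<in> D \<longrightarrow> ereal (u q) < y) (nhds z)" by blast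
      moreover have "filterlim fst (nhds z) (at (z, \<zeta>0) within D \<times> A)"
        using tendsto_fst[OF tendsto_ident_at[of "(z, \<zeta>0)"]] by simp
      ultimately have "eventually (\<lambda>p. fst p \<in> D \<longrightarrow> ereal (u (fst p)) < y) (at (z, \<zeta>0) within D \<times> A)"
        by (rule eventually_compose_filterlim)
      moreover have "eventually (\<lambda>p. p \<in> D \<times> A) (at (z, \<zeta>0) within D \<times> A)"
        by (simp add: eventually_at_filter)
      ultimately show "eventually (\<lambda>p. y > ereal (u (fst p))) (at (z, \<zeta>0) within D \<times> A)"
        by eventually_elim auto
    qed
    show "((\<lambda>p. h (snd p)) \<longlongrightarrow> h \<zeta>0) (at (z, \<zeta>0) within D \<times> A)"
      using tendsto_snd[OF tendsto_ident_at[of "(z, \<zeta>0)"]] by (intro isCont_tendsto_compose[OF h]) simp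
  qed
  finally show ?thesis by simp
qed

lemma mem_W_if_boundary_bounds:
  fixes D :: "(complex^'n) set"
  assumes psh: "psh2 (D \<times> annulus) (\<lambda>p. ereal (V p))"
    and nonpos: "\<And>p. p \<in> D \<times> annulus \<Longrightarrow> V p \<le> 0"
    and u0: "usc_on D (\<lambda>z. ereal (u0 z))" and u1: "usc_on D (\<lambda>z. ereal (u1 z))"
    and le0: "\<And>p. p \<in> D \<times> annulus \<Longrightarrow> V p \<le> u0 (fst p) + hin (snd p)"
    and le1: "\<And>p. p \<in> D \<times> annulus \<Longrightarrow> V p \<le> u1 (fst p) + hout (snd p)"
    and hin: "\<And>\<zeta>. cmod \<zeta> = 1 \<Longrightarrow> isCont hin \<zeta> \<and> hin \<zeta> = 0"
    and hout: "\<And>\<zeta>. cmod \<zeta> = exp 1 \<Longrightarrow> isCont hout \<zeta> \<and> hout \<zeta> = 0"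
  shows "(\<lambda>p. ereal (V p)) \<in> W D u0 u1"
  unfolding W_def
proof (intro CollectI conjI ballI allI impI psh)
  show "\<And>p. p \<in> D \<times> annulus \<Longrightarrow> ereal (V p) \<le> 0" using nonpos by simp
  show "Limsup (at (z, \<zeta>0) within D \<times> annulus) (\<lambda>p. ereal (V p)) \<le> ereal (u0 z)"
    if "z \<in> D" "cmod \<zeta>0 = 1" for z \<zeta>0
    using Limsup_le_usc_fst_add_continuous_snd[where A=annulus, OF u0 that(1) le0 conjunct1[OF hin[OF that(2)]]]
      hin[OF that(2)] by simp
  show "Limsup (at (z, \<zeta>0) within D \<times> annulus) (\<lambda>p. ereal (V p)) \<le> ereal (u1 z)"
    if "z \<in> D" "cmod \<zeta>0 = exp 1" for z \<zeta>0
    using Limsup_le_usc_fst_add_continuous_snd[where A=annulus, OF u1 that(1) le1 conjunct1[OF hout[OF that(2)]]]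
      hout[OF that(2)] by simp
qed

lemma psh2_E0_add_ln_norm_snd:
  fixes D :: "(complex^'n) set"
  assumes u: "u \<in> E0 D"
  shows "psh2 (D \<times> annulus) (\<lambda>p. ereal (u (fst p) + (c * ln (cmod (snd p)) + d)))"
proof -
  obtain B where B: "\<forall>z\<in>D. \<bar>u z\<bar> \<le> B" using E0_bounded[OF u] by blast
  have "open D" using E0_psh[OF u] by (simp add: psh_gen_def)
  have ln_bd: "\<bar>c * ln (cmod q) + d\<bar> \<le> \<bar>c\<bar> + \<bar>d\<bar>" if "q \<in> annulus" for q
  proof -
    have "\<bar>ln (cmod q)\<bar> \<le> 1" using ln_norm_annulus[OF that] by simp
    then have "\<bar>c * ln (cmod q)\<bar> \<le> \<bar>c\<bar>" by (simp add: abs_mult mult_left_le)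
    then show ?thesis using abs_triangle_ineq[of "c * ln (cmod q)" d] by linarith
  qed
  show ?thesis
  proof (rule psh_gen_add[OF continuous_on_circle_pair])
    show "psh2 (D \<times> annulus) (\<lambda>p. ereal (u (fst p)))"
      by (rule psh2_compose_fst[OF E0_psh[OF u] open_annulus])
    show "psh2 (D \<times> annulus) (\<lambda>p. ereal (c * ln (cmod (snd p)) + d))"
      by (rule psh2_ln_norm_snd[OF \<open>open D\<close> open_annulus]) (simp add: annulus_def)
    show "\<bar>u (fst p)\<bar> \<le> B + \<bar>c\<bar> + \<bar>d\<bar>" "\<bar>c * ln (cmod (snd p)) + d\<bar> \<le> B + \<bar>c\<bar> + \<bar>d\<bar>"
      if "p \<in> D \<times> annulus" for p
    proof -
      have "\<bar>u (fst p)\<bar> \<le> B" "\<bar>c * ln (cmod (snd p)) + d\<bar> \<le> \<bar>c\<bar> + \<bar>d\<bar>"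
        using that B ln_bd by (auto simp: mem_Times_iff)
      then show "\<bar>u (fst p)\<bar> \<le> B + \<bar>c\<bar> + \<bar>d\<bar>" "\<bar>c * ln (cmod (snd p)) + d\<bar> \<le> B + \<bar>c\<bar> + \<bar>d\<bar>"
        using abs_ge_zero[of "u (fst p)"] by linarith+
    qed
  qed
qed

lemma sum_in_W:
  fixes D :: "(complex^'n) set"
  assumes D: "bounded D" and u0: "u0 \<in> E0 D" and u1: "u1 \<in> E0 D"
  shows "(\<lambda>p. ereal (u0 (fst p) + u1 (fst p))) \<in> W D u0 u1"
proof (rule mem_W_if_boundary_bounds[where hin="\<lambda>_. 0" and hout="\<lambda>_. 0", OF _ _ E0_usc[OF u0] E0_usc[OF u1]])
  obtain B0 B1 where "\<forall>z\<in>D. \<bar>u0 z\<bar> \<le> B0" "\<forall>z\<in>D. \<bar>u1 z\<bar> \<le> B1"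
    using E0_bounded[OF u0] E0_bounded[OF u1] by blast
  then show "psh2 (D \<times> annulus) (\<lambda>p. ereal (u0 (fst p) + u1 (fst p)))"
    by (intro psh_gen_add[OF continuous_on_circle_pair, where B="max B0 B1"]
        psh2_compose_fst E0_psh[OF u0] E0_psh[OF u1] open_annulus) (auto simp: mem_Times_iff)
qed (use E0_nonpos[OF u0 D] E0_nonpos[OF u1 D] in \<open>auto simp: mem_Times_iff intro: add_nonpos_nonpos\<close>)

lemma max_in_W:
  fixes D :: "(complex^'n) set"
  assumes D: "bounded D" and u0: "u0 \<in> E0 D" and u1: "u1 \<in> E0 D"
    and M0: "\<And>z. z \<in> D \<Longrightarrow> \<bar>u0 z\<bar> \<le> M0" and M1: "\<And>z. z \<in> D \<Longrightarrow> \<bar>u1 z\<bar> \<le> M1"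
  shows "(\<lambda>p. ereal (max (u0 (fst p) - M1 * ln (cmod (snd p))) (u1 (fst p) - M0 * (1 - ln (cmod (snd p))))))
    \<in> W D u0 u1"
proof (rule mem_W_if_boundary_bounds[where hin="\<lambda>\<zeta>. M0 * ln (cmod \<zeta>)" and hout="\<lambda>\<zeta>. M1 * (1 - ln (cmod \<zeta>))",
      OF _ _ E0_usc[OF u0] E0_usc[OF u1]])
  have "psh2 (D \<times> annulus) (\<lambda>p. max (ereal (u0 (fst p) + (- M1 * ln (cmod (snd p)) + 0)))
      (ereal (u1 (fst p) + (M0 * ln (cmod (snd p)) + - M0))))"
    by (intro psh_gen_max psh2_E0_add_ln_norm_snd u0 u1)
  then show "psh2 (D \<times> annulus) (\<lambda>p. ereal (max (u0 (fst p) - M1 * ln (cmod (snd p))) (u1 (fst p) - M0 * (1 - ln (cmod (snd p))))))"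
    by (simp add: algebra_simps)
next
  fix p assume p: "p \<in> D \<times> annulus"
  then have L: "0 < ln (cmod (snd p))" "ln (cmod (snd p)) < 1" using ln_norm_annulus by auto
  have bounds: "\<bar>u0 (fst p)\<bar> \<le> M0" "\<bar>u1 (fst p)\<bar> \<le> M1" "u0 (fst p) \<le> 0" "u1 (fst p) \<le> 0"
    using p M0 M1 E0_nonpos[OF u0 D] E0_nonpos[OF u1 D] by auto
  have "0 \<le> M0" "0 \<le> M1" using bounds(1,2) abs_ge_zero by (blast intro: order_trans)+
  then have "0 \<le> M0 * ln (cmod (snd p))" "M0 * ln (cmod (snd p)) \<le> M0"
    "0 \<le> M1 * ln (cmod (snd p))" "M1 * ln (cmod (snd p)) \<le> M1"
    using L by (simp_all add: mult_left_le)
  then show "max (u0 (fst p) - M1 * ln (cmod (snd p))) (u1 (fst p) - M0 * (1 - ln (cmod (snd p)))) \<le> 0"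
    and "max (u0 (fst p) - M1 * ln (cmod (snd p))) (u1 (fst p) - M0 * (1 - ln (cmod (snd p))))
      \<le> u0 (fst p) + M0 * ln (cmod (snd p))"
    and "max (u0 (fst p) - M1 * ln (cmod (snd p))) (u1 (fst p) - M0 * (1 - ln (cmod (snd p))))
      \<le> u1 (fst p) + M1 * (1 - ln (cmod (snd p)))"
    using bounds by (auto simp: algebra_simps abs_le_iff)
next
  show "isCont (\<lambda>\<zeta>. M0 * ln (cmod \<zeta>)) \<zeta> \<and> M0 * ln (cmod \<zeta>) = 0" if "cmod \<zeta> = 1" for \<zeta>
    using that by (intro conjI continuous_intros) auto
  show "isCont (\<lambda>\<zeta>. M1 * (1 - ln (cmod \<zeta>))) \<zeta> \<and> M1 * (1 - ln (cmod \<zeta>)) = 0" if "cmod \<zeta> = exp 1" for \<zeta>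
    using that by (intro conjI continuous_intros) auto
qed

section \<open>Estimates for the geodesic\<close>

lemma annulus_exp: "t \<in> {0<..<1} \<Longrightarrow> complex_of_real (exp t) \<in> annulus"
  by (simp add: annulus_def)

lemma geodesic_le_interpolation:
  assumes t: "t \<in> {0<..<1}" and z: "z \<in> D"
  shows "geodesic D u0 u1 t z \<le> ereal ((1 - t) * u0 z + t * u1 z)"
  unfolding geodesic_def uhat_def
proof (rule SUP_least)
  fix U assume "U \<in> W D u0 u1"
  from W_le_interpolation[OF this z annulus_exp[OF t]]
  show "U (z, complex_of_real (exp t)) \<le> ereal ((1 - t) * u0 z + t * u1 z)"
    by (simp add: algebra_simps)
qed

lemma mem_W_le_geodesic:
  "V \<in> W D u0 u1 \<Longrightarrow> V (z, complex_of_real (exp t)) \<le> geodesic D u0 u1 t z"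
  unfolding geodesic_def uhat_def by (rule SUP_upper)

lemma geodesic_ge_sum:
  fixes D :: "(complex^'n) set"
  assumes "bounded D" "u0 \<in> E0 D" "u1 \<in> E0 D"
  shows "ereal (u0 z + u1 z) \<le> geodesic D u0 u1 t z"
  using mem_W_le_geodesic[OF sum_in_W[OF assms]] by simp

lemma geodesic_ge_max:
  fixes D :: "(complex^'n) set"
  assumes "bounded D" "u0 \<in> E0 D" "u1 \<in> E0 D"
    and "\<And>z. z \<in> D \<Longrightarrow> \<bar>u0 z\<bar> \<le> M0" "\<And>z. z \<in> D \<Longrightarrow> \<bar>u1 z\<bar> \<le> M1"
  shows "ereal (max (u0 z - M1 * t) (u1 z - M0 * (1 - t))) \<le> geodesic D u0 u1 t z"
  using mem_W_le_geodesic[OF max_in_W[OF assms]] by simp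

lemma abs_ereal_diff_le:
  assumes "ereal (c - e) \<le> x" "x \<le> ereal (c + e)"
  shows "\<bar>x - ereal c\<bar> \<le> ereal e"
  using assms by (cases x) auto

lemma geodesic_dist_endpoints:
  fixes D :: "(complex^'n) set"
  assumes D: "bounded D" and u0: "u0 \<in> E0 D" and u1: "u1 \<in> E0 D"
    and M0: "\<And>z. z \<in> D \<Longrightarrow> \<bar>u0 z\<bar> \<le> M0" and M1: "\<And>z. z \<in> D \<Longrightarrow> \<bar>u1 z\<bar> \<le> M1"
    and t: "t \<in> {0<..<1}" and z: "z \<in> D"
  shows "\<bar>geodesic D u0 u1 t z - ereal (u0 z)\<bar> \<le> ereal ((M0 + M1) * t)"
    and "\<bar>geodesic D u0 u1 t z - ereal (u1 z)\<bar> \<le> ereal ((M0 + M1) * (1 - t))"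
proof -
  have bd: "\<bar>u0 z\<bar> \<le> M0" "\<bar>u1 z\<bar> \<le> M1" using M0 M1 z by auto
  then have "0 \<le> M0" "0 \<le> M1" by (meson abs_ge_zero order_trans)+
  have t01: "0 < t" "t < 1" using t by auto
  have lower: "ereal (max (u0 z - M1 * t) (u1 z - M0 * (1 - t))) \<le> geodesic D u0 u1 t z"
    by (rule geodesic_ge_max[OF D u0 u1 M0 M1])
  have upper: "geodesic D u0 u1 t z \<le> ereal ((1 - t) * u0 z + t * u1 z)"
    by (rule geodesic_le_interpolation[OF t z])
  have "t * (u1 z - u0 z) \<le> t * (M0 + M1)" "(1 - t) * (u0 z - u1 z) \<le> (1 - t) * (M0 + M1)"
    using bd t01 by (intro mult_left_mono; simp add: abs_le_iff)+
  moreover have "M1 * t \<le> (M0 + M1) * t" "M0 * (1 - t) \<le> (M0 + M1) * (1 - t)"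
    using \<open>0 \<le> M0\<close> \<open>0 \<le> M1\<close> t01 by (intro mult_right_mono; simp)+
  ultimately have "ereal (u0 z - (M0 + M1) * t) \<le> ereal (max (u0 z - M1 * t) (u1 z - M0 * (1 - t)))"
    "ereal ((1 - t) * u0 z + t * u1 z) \<le> ereal (u0 z + (M0 + M1) * t)"
    "ereal (u1 z - (M0 + M1) * (1 - t)) \<le> ereal (max (u0 z - M1 * t) (u1 z - M0 * (1 - t)))"
    "ereal ((1 - t) * u0 z + t * u1 z) \<le> ereal (u1 z + (M0 + M1) * (1 - t))"
    by (simp_all add: algebra_simps le_max_iff_disj)
  then have "ereal (u0 z - (M0 + M1) * t) \<le> geodesic D u0 u1 t z"
    "geodesic D u0 u1 t z \<le> ereal (u0 z + (M0 + M1) * t)"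
    "ereal (u1 z - (M0 + M1) * (1 - t)) \<le> geodesic D u0 u1 t z"
    "geodesic D u0 u1 t z \<le> ereal (u1 z + (M0 + M1) * (1 - t))"
    using lower upper by (meson order_trans)+
  then show "\<bar>geodesic D u0 u1 t z - ereal (u0 z)\<bar> \<le> ereal ((M0 + M1) * t)"
    and "\<bar>geodesic D u0 u1 t z - ereal (u1 z)\<bar> \<le> ereal ((M0 + M1) * (1 - t))"
    by (simp_all add: abs_ereal_diff_le)
qed

lemma geodesic_abs_le:
  fixes D :: "(complex^'n) set"
  assumes "bounded D" "u0 \<in> E0 D" "u1 \<in> E0 D" "t \<in> {0<..<1}" "z \<in> D"
  shows "\<bar>geodesic D u0 u1 t z\<bar> \<le> ereal (\<bar>u0 z\<bar> + \<bar>u1 z\<bar>)"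
proof -
  have "(1 - t) * u0 z \<le> (1 - t) * \<bar>u0 z\<bar>" "t * u1 z \<le> t * \<bar>u1 z\<bar>"
    using assms(4) by (intro mult_left_mono; simp)+
  moreover have "(1 - t) * \<bar>u0 z\<bar> \<le> \<bar>u0 z\<bar>" "t * \<bar>u1 z\<bar> \<le> \<bar>u1 z\<bar>"
    using assms(4) by (intro mult_left_le_one_le; simp)+
  ultimately have "(1 - t) * u0 z \<le> \<bar>u0 z\<bar>" "t * u1 z \<le> \<bar>u1 z\<bar>" by linarith+
  then have "(1 - t) * u0 z + t * u1 z \<le> \<bar>u0 z\<bar> + \<bar>u1 z\<bar>" by linarith
  then show ?thesis
    using geodesic_ge_sum[OF assms(1-3), of z t] geodesic_le_interpolation[OF assms(4,5), of u0 u1]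
    by (cases "geodesic D u0 u1 t z") auto
qed

lemma tends_to_zero_at_boundary_dominated:
  fixes D :: "'a::t2_space set"
  assumes f0: "tends_to_zero_at_boundary D (\<lambda>z. ereal (f0 z))" and f1: "tends_to_zero_at_boundary D (\<lambda>z. ereal (f1 z))"
    and dom: "\<And>z. z \<in> D \<Longrightarrow> \<bar>g z\<bar> \<le> ereal (\<bar>f0 z\<bar> + \<bar>f1 z\<bar>)"
  shows "tends_to_zero_at_boundary D g"
  unfolding tends_to_zero_at_boundary_def
proof (intro allI impI)
  fix \<epsilon> :: real assume "\<epsilon> > 0"
  then have half: "\<epsilon> / 2 > 0" by simp
  obtain K0 where K0: "compact K0" "K0 \<subseteq> D" "\<forall>z\<in>D - K0. \<bar>ereal (f0 z)\<bar> < ereal (\<epsilon> / 2)"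
    using f0[unfolded tends_to_zero_at_boundary_def, rule_format, OF half] by blast
  obtain K1 where K1: "compact K1" "K1 \<subseteq> D" "\<forall>z\<in>D - K1. \<bar>ereal (f1 z)\<bar> < ereal (\<epsilon> / 2)"
    using f1[unfolded tends_to_zero_at_boundary_def, rule_format, OF half] by blast
  show "\<exists>K. compact K \<and> K \<subseteq> D \<and> (\<forall>z\<in>D - K. \<bar>g z\<bar> < ereal \<epsilon>)"
  proof (intro exI conjI ballI)
    show "compact (K0 \<union> K1)" "K0 \<union> K1 \<subseteq> D" using K0 K1 by auto
    fix z assume z: "z \<in> D - (K0 \<union> K1)"
    then have "\<bar>f0 z\<bar> < \<epsilon> / 2" "\<bar>f1 z\<bar> < \<epsilon> / 2" using K0(3) K1(3) by auto
    then have "\<bar>f0 z\<bar> + \<bar>f1 z\<bar> < \<epsilon>" by linarith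
    then show "\<bar>g z\<bar> < ereal \<epsilon>" using dom[of z] z by (simp add: le_less_trans)
  qed
qed

lemma uniform_approx_if_linear_bound:
  assumes bound: "\<And>t z. t \<in> T \<Longrightarrow> z \<in> D \<Longrightarrow> \<bar>f t z - ereal (g z)\<bar> \<le> ereal (C * s t)"
    and s: "\<And>t. t \<in> T \<Longrightarrow> 0 \<le> s t"
  shows "\<forall>\<epsilon>>0. \<exists>\<delta>>0. \<forall>t\<in>T. s t < \<delta> \<longrightarrow> (\<forall>z\<in>D. \<bar>f t z - ereal (g z)\<bar> < ereal \<epsilon>)"
proof (intro allI impI)
  fix \<epsilon> :: real assume "\<epsilon> > 0"
  show "\<exists>\<delta>>0. \<forall>t\<in>T. s t < \<delta> \<longrightarrow> (\<forall>z\<in>D. \<bar>f t z - ereal (g z)\<bar> < ereal \<epsilon>)"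
  proof (intro exI conjI ballI impI)
    show "\<epsilon> / (\<bar>C\<bar> + 1) > 0" using \<open>\<epsilon> > 0\<close> by simp
    fix t z assume "t \<in> T" "s t < \<epsilon> / (\<bar>C\<bar> + 1)" "z \<in> D"
    then have "(\<bar>C\<bar> + 1) * s t < \<epsilon>" by (simp add: field_simps add_pos_nonneg)
    moreover have "C * s t \<le> (\<bar>C\<bar> + 1) * s t" using s[OF \<open>t \<in> T\<close>] by (intro mult_right_mono) auto
    ultimately have "C * s t < \<epsilon>" by linarith
    then have "ereal (C * s t) < ereal \<epsilon>" by simp
    then show "\<bar>f t z - ereal (g z)\<bar> < ereal \<epsilon>"
      by (rule le_less_trans[OF bound[OF \<open>t \<in> T\<close> \<open>z \<in> D\<close>]])
  qed
qed

lemma abs_le_SUP_abs: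
  assumes "u \<in> E0 D" "z \<in> D"
  shows "\<bar>u z\<bar> \<le> (SUP z\<in>D. \<bar>u z\<bar>)"
  using E0_bounded[OF assms(1)] assms(2) by (auto intro!: cSUP_upper bdd_aboveI2)

theorem proposition3p1:
  fixes D :: "(complex^'n) set" and u0 u1 :: "complex^'n \<Rightarrow> real"
  assumes "hyperconvex D" and "u0 \<in> E0 D" and "u1 \<in> E0 D"
  defines "M0 \<equiv> (SUP z\<in>D. \<bar>u0 z\<bar>)" and "M1 \<equiv> (SUP z\<in>D. \<bar>u1 z\<bar>)"
  shows "(\<forall>t\<in>{0<..<1}. tends_to_zero_at_boundary D (geodesic D u0 u1 t))
    \<and> (\<forall>\<epsilon>>0. \<exists>\<delta>>0. \<forall>t\<in>{0<..<1}. t < \<delta> \<longrightarrow>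
           (\<forall>z\<in>D. \<bar>geodesic D u0 u1 t z - ereal (u0 z)\<bar> < ereal \<epsilon>))
    \<and> (\<forall>\<epsilon>>0. \<exists>\<delta>>0. \<forall>t\<in>{0<..<1}. 1 - \<delta> < t \<longrightarrow>
           (\<forall>z\<in>D. \<bar>geodesic D u0 u1 t z - ereal (u1 z)\<bar> < ereal \<epsilon>))
    \<and> (\<forall>t\<in>{0<..<1}. \<forall>z\<in>D. geodesic D u0 u1 t z \<le> ereal ((1 - t) * u0 z + t * u1 z))
    \<and> (\<forall>t\<in>{0<..<1}. \<forall>z\<in>D.
           ereal (max (u0 z - M1 * t) (u1 z - M0 * (1 - t))) \<le> geodesic D u0 u1 t z)"
proof -
  have D: "bounded D" using assms(1) by (simp add: hyperconvex_def)
  have M0: "\<And>z. z \<in> D \<Longrightarrow> \<bar>u0 z\<bar> \<le> M0" and M1: "\<And>z. z \<in> D \<Longrightarrow> \<bar>u1 z\<bar> \<le> M1"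
    unfolding M0_def M1_def using assms(2,3) by (simp_all add: abs_le_SUP_abs)
  note dist = geodesic_dist_endpoints[OF D assms(2,3) M0 M1]
  have "tends_to_zero_at_boundary D (geodesic D u0 u1 t)" if "t \<in> {0<..<1}" for t
    using assms(2,3) unfolding E0_def
    by (blast intro: tends_to_zero_at_boundary_dominated geodesic_abs_le[OF D assms(2,3) that])
  moreover have "\<forall>\<epsilon>>0. \<exists>\<delta>>0. \<forall>t\<in>{0<..<1}. t < \<delta> \<longrightarrow>
      (\<forall>z\<in>D. \<bar>geodesic D u0 u1 t z - ereal (u0 z)\<bar> < ereal \<epsilon>)"
    by (rule uniform_approx_if_linear_bound[where s="\<lambda>t. t", OF dist(1)]) auto
  moreover have "\<forall>\<epsilon>>0. \<exists>\<delta>>0. \<forall>t\<in>{0<..<1}. 1 - t < \<delta> \<longrightarrow>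
      (\<forall>z\<in>D. \<bar>geodesic D u0 u1 t z - ereal (u1 z)\<bar> < ereal \<epsilon>)"
    by (rule uniform_approx_if_linear_bound[where s="\<lambda>t. 1 - t", OF dist(2)]) auto
  then have "\<forall>\<epsilon>>0. \<exists>\<delta>>0. \<forall>t\<in>{0<..<1}. 1 - \<delta> < t \<longrightarrow>
      (\<forall>z\<in>D. \<bar>geodesic D u0 u1 t z - ereal (u1 z)\<bar> < ereal \<epsilon>)"
    by (simp add: algebra_simps)
  moreover have "\<forall>t\<in>{0<..<1}. \<forall>z\<in>D. geodesic D u0 u1 t z \<le> ereal ((1 - t) * u0 z + t * u1 z)"
    using geodesic_le_interpolation by blast
  moreover have "\<forall>t\<in>{0<..<1}. \<forall>z\<in>D. ereal (max (u0 z - M1 * t) (u1 z - M0 * (1 - t))) \<le> geodesic D u0 u1 t z"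
    using geodesic_ge_max[OF D assms(2,3) M0 M1] by blast
  ultimately show ?thesis by blast
qed

end
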